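(* Let $k\in I$ with $a_{kk}=0$ and $p(k)=1$. Define $r_k(\alpha_k)=-\alpha_k$; for $i\ne k$, $r_k(\alpha_i)=\alpha_i$ if $a_{ik}=a_{ki}=0$ and $r_k(\alpha_i)=\alpha_i+\alpha_k$ otherwise. Define $X'_k=Y_k$, $Y'_k=X_k$; for $i\neq k$ with $a_{ik}=a_{ki}=0$ put $X'_i=X_i$, $Y'_i=Y_i$; for $i\neq k$ with $a_{ik}\ne0$ or $a_{ki}\neq0$ put $X'_i=[X_i,X_k]$, $Y'_i=[Y_i,Y_k]$; and $h'_i=[X'_i,Y'_i]$. Then $r_k(\alpha_1),\dots,r_k(\alpha_n)$ are linearly independent, and for all $h\in\mathfrak h$ and $i,j\in I$: $[h,X'_i]=r_k(\alpha_i)(h)X'_i$, $[h,Y'_i]=-r_k(\alpha_i)(h)Y'_i$, $[X'_i,Y'_j]=\delta_{ij}h'_i$. Moreover, if $\alpha_k$ is regular (i.e. for every $j\neq k$, $a_{kj}=0$ implies $a_{jk}=0$), then $\mathfrak h$ together with $X'_1,\dots,X'_n,Y'_1,\dots,Y'_n$ generate $\mathfrak g(A)$.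
   Context: Let $I=\{1,\dots,n\}$, let $A=(a_{ij})_{i,j\in I}$ be a complex $n\times n$ matrix and $p:I\to\mathbb Z_2$ a parity function. Fix a complex vector space $\mathfrak h$ of dimension $n+\operatorname{corank}(A)$, linearly independent $\alpha_1,\dots,\alpha_n\in\mathfrak h^*$ and $h_1,\dots,h_n\in\mathfrak h$ with $\alpha_j(h_i)=a_{ij}$. Let $\bar{\mathfrak g}(A)$ be the Lie superalgebra generated by $\mathfrak h$ (even, abelian) and elements $X_i,Y_i$ ($i\in I$) of parity $p(i)$ subject to $[h,X_i]=\alpha_i(h)X_i$, $[h,Y_i]=-\alpha_i(h)Y_i$, $[X_i,Y_j]=\delta_{ij}h_i$. The contragredient Lie superalgebra $\mathfrak g(A)$ is the quotient of $\bar{\mathfrak g}(A)$ by the unique maximal ideal meeting $\mathfrak h$ trivially; we keep writing $X_i,Y_i,h_i$ for the images. *)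

theory Defs
  imports Complex_Main "HOL-Library.Function_Algebras"
begin

text \<open>Parities: \<open>False\<close> = even (0 in Z2), \<open>True\<close> = odd (1 in Z2).
  The homogeneous component of parity \<open>a\<close> is \<open>G0\<close> resp. \<open>G1\<close>.\<close>

definition par_part :: "'g set \<Rightarrow> 'g set \<Rightarrow> bool \<Rightarrow> 'g set" where
  "par_part G0 G1 a = (if a then G1 else G0)"

definition psign :: "bool \<Rightarrow> bool \<Rightarrow> complex" where
  "psign a b = (if a \<and> b then -1 else 1)"

definition lie_superalgebra ::
  "(complex \<Rightarrow> 'g::ab_group_add \<Rightarrow> 'g) \<Rightarrow> ('g \<Rightarrow> 'g \<Rightarrow> 'g) \<Rightarrow> 'g set \<Rightarrow> 'g set \<Rightarrow> bool" where
  "lie_superalgebra scale br G0 G1 \<longleftrightarrow>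
     vector_space scale \<and>
     (\<forall>x y z. br (x + y) z = br x z + br y z) \<and>
     (\<forall>x y z. br x (y + z) = br x y + br x z) \<and>
     (\<forall>c x y. br (scale c x) y = scale c (br x y)) \<and>
     (\<forall>c x y. br x (scale c y) = scale c (br x y)) \<and>
     module.subspace scale G0 \<and> module.subspace scale G1 \<and>
     G0 \<inter> G1 = {0} \<and> (\<forall>x. \<exists>u\<in>G0. \<exists>v\<in>G1. x = u + v) \<and>
     (\<forall>a b x y. x \<in> par_part G0 G1 a \<longrightarrow> y \<in> par_part G0 G1 b \<longrightarrow>
        br x y \<in> par_part G0 G1 (a \<noteq> b)) \<and>
     (\<forall>a b x y. x \<in> par_part G0 G1 a \<longrightarrow> y \<in> par_part G0 G1 b \<longrightarrow>
        br x y = - scale (psign a b) (br y x)) \<and>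
     (\<forall>a b x y z. x \<in> par_part G0 G1 a \<longrightarrow> y \<in> par_part G0 G1 b \<longrightarrow>
        br x (br y z) = br (br x y) z + scale (psign a b) (br y (br x z)))"

definition lie_generated ::
  "(complex \<Rightarrow> 'g::ab_group_add \<Rightarrow> 'g) \<Rightarrow> ('g \<Rightarrow> 'g \<Rightarrow> 'g) \<Rightarrow> 'g set \<Rightarrow> 'g set" where
  "lie_generated scale br S =
     \<Inter>{L. module.subspace scale L \<and> S \<subseteq> L \<and> (\<forall>x\<in>L. \<forall>y\<in>L. br x y \<in> L)}"

definition lie_ideal ::
  "(complex \<Rightarrow> 'g::ab_group_add \<Rightarrow> 'g) \<Rightarrow> ('g \<Rightarrow> 'g \<Rightarrow> 'g) \<Rightarrow> 'g set \<Rightarrow> bool" where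
  "lie_ideal scale br J \<longleftrightarrow> module.subspace scale J \<and> (\<forall>x. \<forall>y\<in>J. br x y \<in> J)"

definition corank :: "nat \<Rightarrow> (nat \<Rightarrow> nat \<Rightarrow> complex) \<Rightarrow> nat" where
  "corank n A = vector_space.dim (\<lambda>c (v::nat \<Rightarrow> complex) i. c * v i)
     {v. (\<forall>i. i \<notin> {1..n} \<longrightarrow> v i = 0) \<and> (\<forall>i\<in>{1..n}. (\<Sum>j=1..n. A i j * v j) = 0)}"

text \<open>A function \<open>'g \<Rightarrow> complex\<close> which is linear on the subspace \<open>H\<close>
  (an element of \<open>H\<^sup>*\<close>; only its values on \<open>H\<close> matter).\<close>
definition linear_on ::
  "(complex \<Rightarrow> 'g::ab_group_add \<Rightarrow> 'g) \<Rightarrow> 'g set \<Rightarrow> ('g \<Rightarrow> complex) \<Rightarrow> bool" where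
  "linear_on scale H f \<longleftrightarrow>
     (\<forall>x\<in>H. \<forall>y\<in>H. f (x + y) = f x + f y) \<and> (\<forall>c. \<forall>x\<in>H. f (scale c x) = c * f x)"

definition lin_indep_on :: "'g set \<Rightarrow> nat \<Rightarrow> (nat \<Rightarrow> 'g \<Rightarrow> complex) \<Rightarrow> bool" where
  "lin_indep_on H n f \<longleftrightarrow>
     (\<forall>c. (\<forall>x\<in>H. (\<Sum>i=1..n. c i * f i x) = 0) \<longrightarrow> (\<forall>i\<in>{1..n}. c i = 0))"

definition odd_refl_root ::
  "(nat \<Rightarrow> nat \<Rightarrow> complex) \<Rightarrow> (nat \<Rightarrow> 'g \<Rightarrow> complex) \<Rightarrow> nat \<Rightarrow> nat \<Rightarrow> 'g \<Rightarrow> complex" where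
  "odd_refl_root A \<alpha> k i = (\<lambda>h. if i = k then - \<alpha> k h
      else if A i k = 0 \<and> A k i = 0 then \<alpha> i h else \<alpha> i h + \<alpha> k h)"

definition odd_refl_X ::
  "('g \<Rightarrow> 'g \<Rightarrow> 'g) \<Rightarrow> (nat \<Rightarrow> nat \<Rightarrow> complex) \<Rightarrow> (nat \<Rightarrow> 'g) \<Rightarrow> (nat \<Rightarrow> 'g) \<Rightarrow> nat \<Rightarrow> nat \<Rightarrow> 'g" where
  "odd_refl_X br A X Y k i = (if i = k then Y k
      else if A i k = 0 \<and> A k i = 0 then X i else br (X i) (X k))"

definition odd_refl_Y ::
  "('g \<Rightarrow> 'g \<Rightarrow> 'g) \<Rightarrow> (nat \<Rightarrow> nat \<Rightarrow> complex) \<Rightarrow> (nat \<Rightarrow> 'g) \<Rightarrow> (nat \<Rightarrow> 'g) \<Rightarrow> nat \<Rightarrow> nat \<Rightarrow> 'g" where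
  "odd_refl_Y br A X Y k i = (if i = k then X k
      else if A i k = 0 \<and> A k i = 0 then Y i else br (Y i) (Y k))"

definition odd_refl_h ::
  "('g \<Rightarrow> 'g \<Rightarrow> 'g) \<Rightarrow> (nat \<Rightarrow> nat \<Rightarrow> complex) \<Rightarrow> (nat \<Rightarrow> 'g) \<Rightarrow> (nat \<Rightarrow> 'g) \<Rightarrow> nat \<Rightarrow> nat \<Rightarrow> 'g" where
  "odd_refl_h br A X Y k i = br (odd_refl_X br A X Y k i) (odd_refl_Y br A X Y k i)"

definition regular_root :: "nat \<Rightarrow> (nat \<Rightarrow> nat \<Rightarrow> complex) \<Rightarrow> nat \<Rightarrow> bool" where
  "regular_root n A k \<longleftrightarrow> (\<forall>j\<in>{1..n}. j \<noteq> k \<longrightarrow> A k j = 0 \<longrightarrow> A j k = 0)"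

end

theory Submission
  imports Defs
begin

(*
  The new generators
  X'_i, Y'_i are weight vectors of weights +-r_k(alpha_i), since ad h acts as an
  even derivation, and r_k(alpha_1), ..., r_k(alpha_n) are linearly independent
  because r_k is unitriangular up to a sign.

  The relations [X'_i, Y'_j] = 0 (i /= j) rest on one vanishing principle of g(A):
  a vector of weight +-(c_1 alpha_1 + ... + c_n alpha_n) with c /= 0 that is
  annihilated by all ad Y_i (resp. ad X_i) is zero, because the span of its orbit
  under the ad X_i (resp. ad Y_i) is an ideal meeting h trivially. It yields the
  Serre-type relations [X_i,X_j] = [Y_i,Y_j] = 0 when a_ij = a_ji = 0, in particular
  [X_k,X_k] = [Y_k,Y_k] = 0, so ad X_k and ad Y_k square to zero; the relations then
  follow from the super Jacobi identity. Finally, for regular alpha_k the old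
  generators are recovered from the new ones, e.g. X_i = -a_ki^{-1} [[X_i,X_k],Y_k].
*)

locale lie_super =
  fixes scale :: "complex \<Rightarrow> 'g::ab_group_add \<Rightarrow> 'g"
    and br :: "'g \<Rightarrow> 'g \<Rightarrow> 'g"
    and G0 G1 :: "'g set"
  assumes lsa: "lie_superalgebra scale br G0 G1"
begin

abbreviation par :: "bool \<Rightarrow> 'g set" where "par a \<equiv> par_part G0 G1 a"

lemma
  shows vector_space: "vector_space scale"
    and br_addL: "br (x + y) z = br x z + br y z"
    and br_addR: "br x (y + z) = br x y + br x z"
    and br_scaleL: "br (scale c x) y = scale c (br x y)"
    and br_scaleR: "br x (scale c y) = scale c (br x y)"
    and subspace_G0: "module.subspace scale G0"
    and subspace_G1: "module.subspace scale G1"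
    and br_par: "x \<in> par a \<Longrightarrow> y \<in> par b \<Longrightarrow> br x y \<in> par (a \<noteq> b)"
    and super_antisym: "x \<in> par a \<Longrightarrow> y \<in> par b \<Longrightarrow> br x y = - scale (psign a b) (br y x)"
    and super_jacobi: "x \<in> par a \<Longrightarrow> y \<in> par b \<Longrightarrow>
          br x (br y z) = br (br x y) z + scale (psign a b) (br y (br x z))"
  by (insert lsa, unfold lie_superalgebra_def, elim conjE, meson)+

end

sublocale lie_super \<subseteq> vector_space scale by (rule vector_space)

context lie_super
begin

lemma psign_simps [simp]: "psign a False = 1" "psign False b = 1" "psign True True = -1"
  by (auto simp: psign_def)

lemma par_simps [simp]: "par False = G0" "par True = G1"
  by (auto simp: par_part_def)

lemma br_zeroL [simp]: "br 0 y = 0"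
  using br_scaleL[of 0 0 y] by simp

lemma br_zeroR [simp]: "br y 0 = 0"
  using br_scaleR[of y 0 0] by simp

lemma br_negL: "br (- x) y = - br x y"
  using br_scaleL[of "-1" x y] by simp

lemma br_negR: "br y (- x) = - br y x"
  using br_scaleR[of y "-1" x] by simp

lemma self_negative_zero:
  fixes w :: 'g
  assumes "w = - w" shows "w = 0"
proof -
  have "scale 2 w = w + w" by (metis one_add_one scale_left_distrib scale_one)
  also have "\<dots> = 0" using assms by (metis add.right_inverse)
  finally have "scale (1/2) (scale 2 w) = 0" by simp
  thus ?thesis by simp
qed

text \<open>An odd element \<open>x\<close> with \<open>[x,x] = 0\<close> is ad-nilpotent of order 2:
  the super Jacobi identity gives \<open>[x,[x,z]] = -[x,[x,z]]\<close>.\<close>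
lemma odd_square_zero_nilpotent:
  assumes x: "x \<in> G1" "br x x = 0"
  shows "br x (br x z) = 0"
proof (rule self_negative_zero)
  show "br x (br x z) = - br x (br x z)"
    using super_jacobi[of x True x True z] x by simp
qed

definition subalgebra :: "'g set \<Rightarrow> bool" where
  "subalgebra L \<longleftrightarrow> subspace L \<and> (\<forall>x\<in>L. \<forall>y\<in>L. br x y \<in> L)"

lemma lie_generated_least: "S \<subseteq> L \<Longrightarrow> subalgebra L \<Longrightarrow> lie_generated scale br S \<subseteq> L"
  unfolding lie_generated_def subalgebra_def by blast

lemma lie_generated_subalgebra: "subalgebra (lie_generated scale br S)"
  unfolding lie_generated_def subalgebra_def by (auto simp: subspace_def)

lemma lie_generated_superset: "S \<subseteq> lie_generated scale br S"
  unfolding lie_generated_def by blast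

definition idealizer :: "'g set \<Rightarrow> 'g set" where
  "idealizer J = {x. \<forall>y\<in>J. br x y \<in> J}"

lemma idealizer_subspace:
  assumes J: "subspace J" shows "subspace (idealizer J)"
  using J unfolding idealizer_def subspace_def by (auto simp: br_addL br_scaleL)

text \<open>By the super Jacobi identity, the idealizer is closed under brackets of
  homogeneous elements.\<close>
lemma idealizer_bracket:
  assumes J: "subspace J" and x: "x \<in> par a" "x \<in> idealizer J" and y: "y \<in> par b" "y \<in> idealizer J"
  shows "br x y \<in> idealizer J"
  unfolding idealizer_def
proof (intro CollectI ballI)
  fix z assume z: "z \<in> J"
  have "br (br x y) z = br x (br y z) - scale (psign a b) (br y (br x z))"
    using super_jacobi[OF x(1) y(1), of z] by (simp add: algebra_simps)
  moreover have "br x (br y z) - scale (psign a b) (br y (br x z)) \<in> J"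
    using x(2) y(2) z J unfolding idealizer_def by (auto intro: subspace_diff subspace_scale)
  ultimately show "br (br x y) z \<in> J" by simp
qed

text \<open>The sums \<open>u + w\<close> of an even and an odd element of the idealizer form a
  subalgebra containing the generators, hence everything.\<close>
lemma ideal_criterion:
  assumes J: "subspace J"
    and S_hom: "\<forall>s\<in>S. \<exists>a. s \<in> par a"
    and S_idealizer: "S \<subseteq> idealizer J"
    and S_gen: "lie_generated scale br S = UNIV"
  shows "lie_ideal scale br J"
proof -
  let ?N = "idealizer J"
  define L where "L = {u + w |u w. u \<in> ?N \<inter> G0 \<and> w \<in> ?N \<inter> G1}"
  have N: "subspace ?N" using J by (rule idealizer_subspace)
  have N0: "subspace (?N \<inter> G0)" and N1: "subspace (?N \<inter> G1)"
    using N subspace_G0 subspace_G1 by (auto intro: subspace_inter)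
  have homog: "br x y \<in> ?N \<inter> par (a \<noteq> b)"
    if "x \<in> ?N \<inter> par a" "y \<in> ?N \<inter> par b" for x y a b
    using that idealizer_bracket[OF J] br_par by blast
  have "subalgebra L"
    unfolding subalgebra_def
  proof (intro conjI ballI)
    show "subspace L" unfolding L_def using N0 N1 by (rule subspace_sums)
  next
    fix x y assume "x \<in> L" "y \<in> L"
    then obtain u w u' w' where uw: "u \<in> ?N \<inter> G0" "w \<in> ?N \<inter> G1" "x = u + w"
      and uw': "u' \<in> ?N \<inter> G0" "w' \<in> ?N \<inter> G1" "y = u' + w'"
      unfolding L_def by blast
    have "br x y = (br u u' + br w w') + (br u w' + br w u')"
      using uw(3) uw'(3) by (simp add: br_addL br_addR algebra_simps)
    moreover have "br u u' + br w w' \<in> ?N \<inter> G0"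
      using subspace_add[OF N0] homog[of u False u' False] homog[of w True w' True] uw uw'
      by auto
    moreover have "br u w' + br w u' \<in> ?N \<inter> G1"
      using subspace_add[OF N1] homog[of u False w' True] homog[of w True u' False] uw uw'
      by auto
    ultimately show "br x y \<in> L" unfolding L_def by blast
  qed
  moreover have "S \<subseteq> L"
  proof
    fix s assume s: "s \<in> S"
    then obtain a where "s \<in> par a" using S_hom by blast
    then consider "s \<in> ?N \<inter> G0" | "s \<in> ?N \<inter> G1"
      using s S_idealizer by (cases a) auto
    thus "s \<in> L"
      unfolding L_def using N0 N1 subspace_0 by cases force+
  qed
  ultimately have "UNIV \<subseteq> L" using lie_generated_least S_gen by metis
  moreover have "L \<subseteq> ?N" unfolding L_def using N by (auto intro: subspace_add)
  ultimately show ?thesis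
    using J unfolding lie_ideal_def idealizer_def by blast
qed

lemma bracket_preserves_span:
  assumes "\<And>u. u \<in> S \<Longrightarrow> br g u \<in> span S" and "x \<in> span S"
  shows "br g x \<in> span S"
  using assms(2)
proof (induction rule: span_induct_alt)
  case base thus ?case by (simp add: span_zero)
next
  case (step c u y) thus ?case
    using assms(1) by (simp add: br_addR br_scaleR span_add span_scale)
qed

end

locale lie_super_torus = lie_super scale br G0 G1
  for scale :: "complex \<Rightarrow> 'g::ab_group_add \<Rightarrow> 'g" and br G0 G1 +
  fixes H :: "'g set"
  assumes H_sub: "subspace H"
    and H_even: "H \<subseteq> G0"
    and H_abel: "\<forall>x\<in>H. \<forall>y\<in>H. br x y = 0"
begin

lemma H_par: "h \<in> H \<Longrightarrow> h \<in> par False"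
  using H_even by auto

text \<open>\<open>w\<close> is an \<open>H\<close>-weight vector of weight \<open>\<beta>\<close> (the zero vector has every weight).\<close>
definition weight_vector :: "('g \<Rightarrow> complex) \<Rightarrow> 'g \<Rightarrow> bool" where
  "weight_vector \<beta> w \<longleftrightarrow> (\<forall>h\<in>H. br h w = scale (\<beta> h) w)"

definition nonzero_weight_vectors :: "'g set" where
  "nonzero_weight_vectors = {w. \<exists>\<beta>. weight_vector \<beta> w \<and> (\<exists>h\<in>H. \<beta> h \<noteq> 0)}"

text \<open>Weights add under the bracket: \<open>ad h\<close> is an even derivation.\<close>
lemma weight_vector_bracket:
  assumes x: "weight_vector \<beta> x" "x \<in> par a" and y: "weight_vector \<gamma> y"
  shows "weight_vector (\<lambda>h. \<beta> h + \<gamma> h) (br x y)"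
  unfolding weight_vector_def
proof
  fix h assume h: "h \<in> H"
  have "br h (br x y) = br (br h x) y + br x (br h y)"
    using super_jacobi[OF H_par[OF h] x(2), of y] by simp
  thus "br h (br x y) = scale (\<beta> h + \<gamma> h) (br x y)"
    using x(1) y h unfolding weight_vector_def by (simp add: br_scaleL br_scaleR scale_left_distrib)
qed

lemma nonzero_weight_vectors_scale:
  "w \<in> nonzero_weight_vectors \<Longrightarrow> scale c w \<in> nonzero_weight_vectors"
  unfolding nonzero_weight_vectors_def weight_vector_def
  by (auto simp: br_scaleR scale_left_commute)

text \<open>Applying \<open>ad h\<^sub>0 - \<beta>(h\<^sub>0)\<close>, with \<open>\<beta>\<close> the weight of the first summand
  and \<open>\<beta>(h\<^sub>0) \<noteq> 0\<close>, kills that summand and rescales the sum by \<open>-\<beta>(h\<^sub>0)\<close>, so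
  induction on the number of summands applies.\<close>
lemma sum_nonzero_weights_in_H:
  assumes "set ws \<subseteq> nonzero_weight_vectors" and "sum_list ws \<in> H"
  shows "sum_list ws = 0"
  using assms
proof (induction "length ws" arbitrary: ws)
  case 0 thus ?case by simp
next
  case (Suc m)
  then obtain w ws' where ws: "ws = w # ws'" by (cases ws) auto
  from Suc.prems(1) ws obtain \<beta> h0 where w: "weight_vector \<beta> w" and h0: "h0 \<in> H" "\<beta> h0 \<noteq> 0"
    unfolding nonzero_weight_vectors_def by auto
  define T where "T y = br h0 y - scale (\<beta> h0) y" for y
  have T_sum: "T (sum_list ys) = sum_list (map T ys)" for ys
    by (induction ys) (simp_all add: T_def br_addR scale_right_distrib)
  have T_weights: "T y \<in> nonzero_weight_vectors" if "y \<in> nonzero_weight_vectors" for y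
  proof -
    from that obtain \<gamma> where "weight_vector \<gamma> y"
      unfolding nonzero_weight_vectors_def by blast
    hence "T y = scale (\<gamma> h0 - \<beta> h0) y"
      using h0 by (simp add: T_def weight_vector_def scale_left_diff_distrib)
    thus ?thesis using that nonzero_weight_vectors_scale by simp
  qed
  have "T w = 0" using w h0 by (simp add: T_def weight_vector_def)
  hence "sum_list (map T ws') = T (sum_list ws)" using ws T_sum[of "w # ws'"] by simp
  also have "\<dots> = scale (- \<beta> h0) (sum_list ws)"
    using H_abel h0 Suc.prems(2) by (simp add: T_def)
  finally have eq: "sum_list (map T ws') = scale (- \<beta> h0) (sum_list ws)" .
  have "sum_list (map T ws') = 0"
  proof (rule Suc.hyps)
    show "m = length (map T ws')" using Suc.hyps(2) ws by simp
    show "set (map T ws') \<subseteq> nonzero_weight_vectors" using Suc.prems(1) ws T_weights by auto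
    show "sum_list (map T ws') \<in> H" unfolding eq using H_sub Suc.prems(2) by (rule subspace_scale)
  qed
  thus ?case using eq h0 by simp
qed

lemma span_nonzero_weights_inter_H:
  assumes S: "S \<subseteq> nonzero_weight_vectors"
  shows "span S \<inter> H = {0}"
proof (intro equalityI subsetI)
  fix x assume x: "x \<in> span S \<inter> H"
  have "x \<in> span S" using x by blast
  hence "\<exists>ws. set ws \<subseteq> nonzero_weight_vectors \<and> x = sum_list ws"
  proof (induction rule: span_induct_alt)
    case base thus ?case by (intro exI[of _ "[]"]) simp
  next
    case (step c u y)
    then obtain ws where "set ws \<subseteq> nonzero_weight_vectors" "y = sum_list ws" by blast
    thus ?case using step(1) S nonzero_weight_vectors_scale
      by (intro exI[of _ "scale c u # ws"]) auto
  qed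
  thus "x \<in> {0}" using x sum_nonzero_weights_in_H by auto
qed (use H_sub span_zero subspace_0 in auto)

end

text \<open>The data of a contragredient Lie superalgebra \<open>\<g>(A)\<close>: the simple roots \<open>\<alpha>\<^sub>i\<close> are
  independent on \<open>H\<close>, the Chevalley generators satisfy the defining relations and
  generate, and no nonzero ideal meets \<open>H\<close> trivially.\<close>
locale contragredient = lie_super_torus scale br G0 G1 H
  for scale :: "complex \<Rightarrow> 'g::ab_group_add \<Rightarrow> 'g" and br G0 G1 H +
  fixes n :: nat and A :: "nat \<Rightarrow> nat \<Rightarrow> complex" and p :: "nat \<Rightarrow> bool"
    and \<alpha> :: "nat \<Rightarrow> 'g \<Rightarrow> complex" and hh X Y :: "nat \<Rightarrow> 'g"
  assumes \<alpha>_indep: "lin_indep_on H n \<alpha>"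
    and hh_in: "\<forall>i\<in>{1..n}. hh i \<in> H"
    and hh_val: "\<forall>i\<in>{1..n}. \<forall>j\<in>{1..n}. \<alpha> j (hh i) = A i j"
    and X_par: "\<forall>i\<in>{1..n}. X i \<in> par_part G0 G1 (p i)"
    and Y_par: "\<forall>i\<in>{1..n}. Y i \<in> par_part G0 G1 (p i)"
    and rel_X: "\<forall>h\<in>H. \<forall>i\<in>{1..n}. br h (X i) = scale (\<alpha> i h) (X i)"
    and rel_Y: "\<forall>h\<in>H. \<forall>i\<in>{1..n}. br h (Y i) = scale (- \<alpha> i h) (Y i)"
    and rel_XY: "\<forall>i\<in>{1..n}. \<forall>j\<in>{1..n}. br (X i) (Y j) = (if i = j then hh i else 0)"
    and gen: "lie_generated scale br (H \<union> X ` {1..n} \<union> Y ` {1..n}) = UNIV"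
    and maximal: "\<forall>J. lie_ideal scale br J \<and> J \<inter> H = {0} \<longrightarrow> J = {0}"
begin

abbreviation I :: "nat set" where "I \<equiv> {1..n}"

definition root_comb :: "(nat \<Rightarrow> nat) \<Rightarrow> 'g \<Rightarrow> complex" where
  "root_comb c h = (\<Sum>i\<in>I. of_nat (c i) * \<alpha> i h)"

lemma root_comb_nonzero:
  assumes "\<exists>j\<in>I. c j \<noteq> 0" shows "\<exists>h\<in>H. root_comb c h \<noteq> 0"
proof (rule ccontr)
  assume "\<not> ?thesis"
  hence "\<forall>i\<in>I. (of_nat (c i) :: complex) = 0"
    using \<alpha>_indep unfolding lin_indep_on_def root_comb_def by auto
  thus False using assms by simp
qed

lemma root_comb_add_simple:
  assumes "i \<in> I" shows "root_comb (\<lambda>l. c l + of_bool (l = i)) h = root_comb c h + \<alpha> i h"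
  using assms by (simp add: root_comb_def algebra_simps sum.distrib)

lemma root_comb_pair:
  assumes "i \<in> I" "j \<in> I"
  shows "root_comb (\<lambda>l. of_bool (l = i) + of_bool (l = j)) h = \<alpha> i h + \<alpha> j h"
  using root_comb_add_simple[OF assms(2), of "\<lambda>l. of_bool (l = i)"]
    root_comb_add_simple[OF assms(1), of "\<lambda>_. 0"]
  by (simp add: root_comb_def)

inductive_set ad_orbit :: "(nat \<Rightarrow> 'g) \<Rightarrow> 'g \<Rightarrow> 'g set" for Z v where
  base: "v \<in> ad_orbit Z v"
| step: "u \<in> ad_orbit Z v \<Longrightarrow> i \<in> I \<Longrightarrow> br (Z i) u \<in> ad_orbit Z v"

text \<open>Setting for the key vanishing argument: \<open>Z\<^sub>i\<close> of weight \<open>\<sigma>\<alpha>\<^sub>i\<close> and \<open>W\<^sub>i\<close> with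
  \<open>[W\<^sub>i,Z\<^sub>j] \<in> H\<close> generate the algebra (\<open>(Z,W,\<sigma>)\<close> is \<open>(X,Y,1)\<close> or \<open>(Y,X,-1)\<close>), and
  \<open>v\<close> has weight \<open>\<sigma> \<Sum> c\<^sub>i\<alpha>\<^sub>i\<close> with \<open>c \<noteq> 0\<close> and is killed by all \<open>ad W\<^sub>i\<close>.\<close>
context
  fixes Z W :: "nat \<Rightarrow> 'g" and \<sigma> :: complex and c :: "nat \<Rightarrow> nat" and v :: 'g
  assumes \<sigma>: "\<sigma> \<noteq> 0"
    and Z_hom: "\<forall>i\<in>I. \<exists>a. Z i \<in> par a"
    and W_hom: "\<forall>i\<in>I. \<exists>a. W i \<in> par a"
    and Z_weight: "\<forall>i\<in>I. weight_vector (\<lambda>h. \<sigma> * \<alpha> i h) (Z i)"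
    and WZ_in_H: "\<forall>i\<in>I. \<forall>j\<in>I. br (W i) (Z j) \<in> H"
    and ZW_gen: "lie_generated scale br (H \<union> Z ` I \<union> W ` I) = UNIV"
    and v_weight: "weight_vector (\<lambda>h. \<sigma> * root_comb c h) v"
    and c_nonzero: "\<exists>j\<in>I. c j \<noteq> 0"
    and W_kills_v: "\<forall>i\<in>I. br (W i) v = 0"
begin

lemma orbit_weight:
  assumes "u \<in> ad_orbit Z v"
  shows "\<exists>d. (\<exists>j\<in>I. d j \<noteq> 0) \<and> weight_vector (\<lambda>h. \<sigma> * root_comb d h) u"
  using assms
proof (induction rule: ad_orbit.induct)
  case base show ?case using v_weight c_nonzero by (intro exI[of _ c] conjI)
next
  case (step u i)
  then obtain d where d: "\<exists>j\<in>I. d j \<noteq> 0" "weight_vector (\<lambda>h. \<sigma> * root_comb d h) u"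
    by blast
  obtain a where a: "Z i \<in> par a" using Z_hom step.hyps(2) by blast
  have "weight_vector (\<lambda>h. \<sigma> * \<alpha> i h + \<sigma> * root_comb d h) (br (Z i) u)"
    using weight_vector_bracket[OF _ a d(2)] Z_weight step.hyps(2) by simp
  hence "weight_vector (\<lambda>h. \<sigma> * root_comb (\<lambda>l. d l + of_bool (l = i)) h) (br (Z i) u)"
    using root_comb_add_simple[OF step.hyps(2)] by (simp add: algebra_simps)
  moreover have "\<exists>j\<in>I. d j + of_bool (j = i) \<noteq> 0" using d(1) by auto
  ultimately show ?case by (intro exI[of _ "\<lambda>l. d l + of_bool (l = i)"] conjI)
qed

lemma orbit_nonzero_weights: "ad_orbit Z v \<subseteq> nonzero_weight_vectors"
proof
  fix u assume "u \<in> ad_orbit Z v"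
  then obtain d where d: "\<exists>j\<in>I. d j \<noteq> 0" "weight_vector (\<lambda>h. \<sigma> * root_comb d h) u"
    using orbit_weight by blast
  obtain h where "h \<in> H" "root_comb d h \<noteq> 0" using root_comb_nonzero[OF d(1)] by blast
  thus "u \<in> nonzero_weight_vectors"
    unfolding nonzero_weight_vectors_def using d(2) \<sigma>
    by (intro CollectI exI[of _ "\<lambda>h. \<sigma> * root_comb d h"]) auto
qed

text \<open>The span of the orbit is stable under \<open>ad H\<close> (it is spanned by weight vectors)
  and, by construction, under every \<open>ad Z\<^sub>i\<close>.\<close>
lemma orbit_span_H_stable:
  assumes "h \<in> H" "x \<in> span (ad_orbit Z v)"
  shows "br h x \<in> span (ad_orbit Z v)"
proof (rule bracket_preserves_span[OF _ assms(2)])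
  fix u assume u: "u \<in> ad_orbit Z v"
  then obtain d where "weight_vector (\<lambda>h. \<sigma> * root_comb d h) u" using orbit_weight by blast
  thus "br h u \<in> span (ad_orbit Z v)"
    using assms(1) u unfolding weight_vector_def by (simp add: span_scale span_base)
qed

lemma orbit_span_Z_stable:
  assumes "i \<in> I" "x \<in> span (ad_orbit Z v)"
  shows "br (Z i) x \<in> span (ad_orbit Z v)"
proof (rule bracket_preserves_span[OF _ assms(2)])
  fix u assume "u \<in> ad_orbit Z v"
  thus "br (Z i) u \<in> span (ad_orbit Z v)" using assms(1) by (intro span_base ad_orbit.step)
qed

text \<open>\<open>ad W\<^sub>i\<close> maps the orbit into its span, by induction along the orbit:
  \<open>[W\<^sub>i,[Z\<^sub>j,u]] = [[W\<^sub>i,Z\<^sub>j],u] \<plusminus> [Z\<^sub>j,[W\<^sub>i,u]]\<close> with \<open>[W\<^sub>i,Z\<^sub>j] \<in> H\<close>.\<close>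
lemma orbit_span_W_stable:
  assumes i: "i \<in> I" and x: "x \<in> span (ad_orbit Z v)"
  shows "br (W i) x \<in> span (ad_orbit Z v)"
proof (rule bracket_preserves_span[OF _ x])
  fix u assume "u \<in> ad_orbit Z v"
  thus "br (W i) u \<in> span (ad_orbit Z v)"
  proof (induction rule: ad_orbit.induct)
    case base thus ?case using W_kills_v i by (simp add: span_zero)
  next
    case (step u j)
    obtain a where a: "W i \<in> par a" using W_hom i by blast
    obtain b where b: "Z j \<in> par b" using Z_hom step.hyps(2) by blast
    have "br (W i) (Z j) \<in> H" using WZ_in_H i step.hyps(2) by blast
    hence H_part: "br (br (W i) (Z j)) u \<in> span (ad_orbit Z v)"
      using step.hyps(1) by (intro orbit_span_H_stable span_base)
    have Z_part: "br (Z j) (br (W i) u) \<in> span (ad_orbit Z v)"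
      using step.hyps(2) step.IH by (rule orbit_span_Z_stable)
    have "br (W i) (br (Z j) u) = br (br (W i) (Z j)) u + scale (psign a b) (br (Z j) (br (W i) u))"
      using a b by (rule super_jacobi)
    thus ?case using H_part Z_part by (simp add: span_add span_scale)
  qed
qed

text \<open>The span of the orbit is an ideal (it is stable under all generators) meeting
  \<open>H\<close> trivially (it is spanned by nonzero-weight vectors); by maximality it is \<open>0\<close>.\<close>
lemma singular_vector_vanishes: "v = 0"
proof -
  let ?J = "span (ad_orbit Z v)"
  have "lie_ideal scale br ?J"
  proof (rule ideal_criterion[OF _ _ _ ZW_gen])
    show "\<forall>s\<in>H \<union> Z ` I \<union> W ` I. \<exists>a. s \<in> par a"
    proof
      fix s assume "s \<in> H \<union> Z ` I \<union> W ` I"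
      thus "\<exists>a. s \<in> par a" using Z_hom W_hom H_par by (elim UnE imageE) blast+
    qed
    show "H \<union> Z ` I \<union> W ` I \<subseteq> idealizer ?J"
      unfolding idealizer_def
    proof (intro subsetI CollectI ballI)
      fix s x assume "s \<in> H \<union> Z ` I \<union> W ` I" "x \<in> ?J"
      thus "br s x \<in> ?J"
        using orbit_span_H_stable orbit_span_Z_stable orbit_span_W_stable by (elim UnE imageE) auto
    qed
  qed simp
  moreover have "?J \<inter> H = {0}"
    using orbit_nonzero_weights by (rule span_nonzero_weights_inter_H)
  ultimately have "?J = {0}" using maximal by simp
  moreover have "v \<in> ?J" by (intro span_base ad_orbit.base)
  ultimately show ?thesis by blast
qed

end

lemma X_par_i: "i \<in> I \<Longrightarrow> X i \<in> par (p i)" using X_par by blast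
lemma Y_par_i: "i \<in> I \<Longrightarrow> Y i \<in> par (p i)" using Y_par by blast
lemma X_homogeneous: "\<forall>i\<in>I. \<exists>a. X i \<in> par a" using X_par by blast
lemma Y_homogeneous: "\<forall>i\<in>I. \<exists>a. Y i \<in> par a" using Y_par by blast
lemma hh_even: "i \<in> I \<Longrightarrow> hh i \<in> par False" using hh_in H_par by blast

lemma X_weight: "i \<in> I \<Longrightarrow> weight_vector (\<alpha> i) (X i)"
  using rel_X by (simp add: weight_vector_def)
lemma Y_weight: "i \<in> I \<Longrightarrow> weight_vector (\<lambda>h. - \<alpha> i h) (Y i)"
  using rel_Y by (simp add: weight_vector_def)

lemma XY: "i \<in> I \<Longrightarrow> j \<in> I \<Longrightarrow> br (X i) (Y j) = (if i = j then hh i else 0)"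
  using rel_XY by blast
lemma YX: "i \<in> I \<Longrightarrow> j \<in> I \<Longrightarrow>
    br (Y j) (X i) = (if i = j then - scale (psign (p i) (p i)) (hh i) else 0)"
  using super_antisym[OF Y_par_i[of j] X_par_i[of i]] XY[of i j] by auto
lemma hX: "i \<in> I \<Longrightarrow> j \<in> I \<Longrightarrow> br (hh j) (X i) = scale (A j i) (X i)"
  using rel_X hh_in hh_val by auto
lemma hY: "i \<in> I \<Longrightarrow> j \<in> I \<Longrightarrow> br (hh j) (Y i) = scale (- A j i) (Y i)"
  using rel_Y hh_in hh_val by auto
lemma Xh: "i \<in> I \<Longrightarrow> j \<in> I \<Longrightarrow> br (X i) (hh j) = - scale (A j i) (X i)"
  using super_antisym[OF X_par_i[of i] hh_even[of j]] hX[of i j] by simp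
lemma Yh: "i \<in> I \<Longrightarrow> j \<in> I \<Longrightarrow> br (Y i) (hh j) = scale (A j i) (Y i)"
  using super_antisym[OF Y_par_i[of i] hh_even[of j]] hY[of i j] by simp

lemma positive_singular_vector_vanishes:
  assumes "weight_vector (root_comb c) v" "\<exists>j\<in>I. c j \<noteq> 0" "\<forall>i\<in>I. br (Y i) v = 0"
  shows "v = 0"
proof (rule singular_vector_vanishes[where Z = X and W = Y and \<sigma> = 1])
  show "\<forall>i\<in>I. \<forall>j\<in>I. br (Y i) (X j) \<in> H"
    using YX hh_in H_sub by (auto simp: subspace_0 subspace_neg subspace_scale)
qed (use assms gen X_homogeneous Y_homogeneous X_weight in auto)

lemma negative_singular_vector_vanishes:
  assumes "weight_vector (\<lambda>h. - root_comb c h) v" "\<exists>j\<in>I. c j \<noteq> 0" "\<forall>i\<in>I. br (X i) v = 0"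
  shows "v = 0"
proof (rule singular_vector_vanishes[where Z = Y and W = X and \<sigma> = "-1"])
  show "\<forall>i\<in>I. \<forall>j\<in>I. br (X i) (Y j) \<in> H"
    using XY hh_in H_sub by (auto simp: subspace_0)
  show "lie_generated scale br (H \<union> Y ` I \<union> X ` I) = UNIV"
    using gen by (simp add: Un_ac)
qed (use assms X_homogeneous Y_homogeneous Y_weight in auto)

text \<open>The bracket has weight \<open>\<plusminus>(\<alpha>\<^sub>i + \<alpha>\<^sub>j)\<close> and is annihilated
  by every \<open>ad Y\<^sub>l\<close> (resp. \<open>ad X\<^sub>l\<close>), as the Jacobi identity shows.\<close>
lemma X_bracket_vanishes:
  assumes i: "i \<in> I" and j: "j \<in> I" and A0: "A i j = 0" "A j i = 0"
  shows "br (X i) (X j) = 0"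
proof (rule positive_singular_vector_vanishes)
  show "weight_vector (root_comb (\<lambda>l. of_bool (l = i) + of_bool (l = j))) (br (X i) (X j))"
    using weight_vector_bracket[OF X_weight[OF i] X_par_i[OF i] X_weight[OF j]]
    by (simp add: weight_vector_def root_comb_pair[OF i j])
  show "\<forall>l\<in>I. br (Y l) (br (X i) (X j)) = 0"
  proof
    fix l assume l: "l \<in> I"
    show "br (Y l) (br (X i) (X j)) = 0"
      using super_jacobi[OF Y_par_i[OF l] X_par_i[OF i], of "X j"] YX[OF i l] YX[OF j l] i j l A0
      by (auto simp: br_scaleL br_scaleR br_negL br_negR hX Xh)
  qed
qed (use i in auto)

lemma Y_bracket_vanishes:
  assumes i: "i \<in> I" and j: "j \<in> I" and A0: "A i j = 0" "A j i = 0"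
  shows "br (Y i) (Y j) = 0"
proof (rule negative_singular_vector_vanishes)
  show "weight_vector (\<lambda>h. - root_comb (\<lambda>l. of_bool (l = i) + of_bool (l = j)) h) (br (Y i) (Y j))"
    using weight_vector_bracket[OF Y_weight[OF i] Y_par_i[OF i] Y_weight[OF j]]
    by (simp add: root_comb_pair[OF i j])
  show "\<forall>l\<in>I. br (X l) (br (Y i) (Y j)) = 0"
  proof
    fix l assume l: "l \<in> I"
    show "br (X l) (br (Y i) (Y j)) = 0"
      using super_jacobi[OF X_par_i[OF l] Y_par_i[OF i], of "Y j"] XY[OF l i] XY[OF l j] i j l A0
      by (auto simp: br_scaleL br_scaleR br_negL br_negR hY Yh)
  qed
qed (use i in auto)

end

text \<open>The reflected roots stay linearly independent: \<open>r\<^sub>k\<close> is unitriangular with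
  respect to \<open>\<alpha>\<^sub>1, \<dots>, \<alpha>\<^sub>n\<close> up to the sign at \<open>k\<close>. Writing \<open>\<Sum>\<^sub>i c\<^sub>i r\<^sub>k(\<alpha>\<^sub>i) =
  \<Sum>\<^sub>i\<^sub>\<noteq>\<^sub>k c\<^sub>i \<alpha>\<^sub>i + D \<alpha>\<^sub>k\<close>, independence of the \<open>\<alpha>\<^sub>i\<close> forces \<open>c\<^sub>i = 0\<close> for \<open>i \<noteq> k\<close>,
  and then \<open>D = -c\<^sub>k = 0\<close>.\<close>
lemma odd_refl_root_indep:
  assumes indep: "lin_indep_on H n \<alpha>" and k: "k \<in> {1..n}"
  shows "lin_indep_on H n (odd_refl_root A \<alpha> k)"
  unfolding lin_indep_on_def
proof (intro allI impI)
  fix c :: "nat \<Rightarrow> complex"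
  assume c: "\<forall>x\<in>H. (\<Sum>i=1..n. c i * odd_refl_root A \<alpha> k i x) = 0"
  define e :: "nat \<Rightarrow> complex"
    where "e i = (if i = k then -1 else if A i k = 0 \<and> A k i = 0 then 0 else 1)" for i
  define D where "D = (\<Sum>j=1..n. c j * e j)"
  define d where "d i = (if i = k then D else c i)" for i
  have "(\<Sum>i=1..n. c i * odd_refl_root A \<alpha> k i x) = (\<Sum>i=1..n. d i * \<alpha> i x)" for x
  proof -
    have "(\<Sum>i=1..n. c i * odd_refl_root A \<alpha> k i x)
        = (\<Sum>i=1..n. (if i = k then 0 else c i * \<alpha> i x) + c i * e i * \<alpha> k x)"
      by (rule sum.cong) (auto simp: odd_refl_root_def e_def algebra_simps)
    also have "\<dots> = (\<Sum>i=1..n. (if i = k then 0 else c i * \<alpha> i x)) + D * \<alpha> k x"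
      by (simp add: sum.distrib D_def sum_distrib_right)
    also have "\<dots> = (\<Sum>i=1..n. (if i = k then 0 else c i * \<alpha> i x) + (if i = k then D * \<alpha> k x else 0))"
      using k by (simp add: sum.distrib)
    also have "\<dots> = (\<Sum>i=1..n. d i * \<alpha> i x)"
      by (rule sum.cong) (auto simp: d_def)
    finally show ?thesis .
  qed
  hence d0: "\<forall>i\<in>{1..n}. d i = 0" using c indep unfolding lin_indep_on_def by simp
  hence c_off_k: "c i = 0" if "i \<in> {1..n}" "i \<noteq> k" for i
    using d0[rule_format, OF that(1)] that(2) by (simp add: d_def)
  have "D = (\<Sum>j=1..n. if j = k then - c k else 0)"
    unfolding D_def by (rule sum.cong) (auto simp: e_def c_off_k)
  hence "D = - c k" using k by simp
  moreover have "D = 0" using d0[rule_format, OF k] by (simp add: d_def)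
  ultimately have "c k = 0" by simp
  thus "\<forall>i\<in>{1..n}. c i = 0" using c_off_k by metis
qed

locale odd_reflection = contragredient scale br G0 G1 H n A p \<alpha> hh X Y
  for scale :: "complex \<Rightarrow> 'g::ab_group_add \<Rightarrow> 'g" and br G0 G1 H n A p \<alpha> hh X Y +
  fixes k :: nat
  assumes k_in: "k \<in> {1..n}" and akk: "A k k = 0" and pk: "p k"
begin

abbreviation X' :: "nat \<Rightarrow> 'g" where "X' \<equiv> odd_refl_X br A X Y k"
abbreviation Y' :: "nat \<Rightarrow> 'g" where "Y' \<equiv> odd_refl_Y br A X Y k"
abbreviation r :: "nat \<Rightarrow> 'g \<Rightarrow> complex" where "r \<equiv> odd_refl_root A \<alpha> k"

lemma reflected_at_k: "r k = (\<lambda>h. - \<alpha> k h)" "X' k = Y k" "Y' k = X k"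
  by (simp_all add: odd_refl_root_def odd_refl_X_def odd_refl_Y_def)

lemma reflected_unlinked:
  assumes "i \<noteq> k" "A i k = 0" "A k i = 0"
  shows "r i = \<alpha> i" "X' i = X i" "Y' i = Y i"
  using assms by (simp_all add: odd_refl_root_def odd_refl_X_def odd_refl_Y_def fun_eq_iff)

lemma reflected_linked:
  assumes "i \<noteq> k" "A i k \<noteq> 0 \<or> A k i \<noteq> 0"
  shows "r i = (\<lambda>h. \<alpha> i h + \<alpha> k h)" "X' i = br (X i) (X k)" "Y' i = br (Y i) (Y k)"
  using assms by (auto simp: odd_refl_root_def odd_refl_X_def odd_refl_Y_def)

lemma Xk_odd: "X k \<in> par True" using X_par_i[OF k_in] pk by simp
lemma Yk_odd: "Y k \<in> par True" using Y_par_i[OF k_in] pk by simp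

text \<open>Since \<open>\<alpha>\<^sub>k\<close> is odd isotropic, \<open>X\<^sub>k\<close> and \<open>Y\<^sub>k\<close> square to zero, so \<open>ad X\<^sub>k\<close> and
  \<open>ad Y\<^sub>k\<close> are nilpotent of order 2.\<close>
lemma Xk_nilpotent: "br (X k) (br (X k) z) = 0"
  using odd_square_zero_nilpotent[OF Xk_odd[simplified] X_bracket_vanishes[OF k_in k_in akk akk]] .

lemma Yk_nilpotent: "br (Y k) (br (Y k) z) = 0"
  using odd_square_zero_nilpotent[OF Yk_odd[simplified] Y_bracket_vanishes[OF k_in k_in akk akk]] .

lemma reflected_X_weight:
  assumes i: "i \<in> I" shows "weight_vector (r i) (X' i)"
proof -
  consider "i = k" | "i \<noteq> k" "A i k = 0" "A k i = 0" | "i \<noteq> k" "A i k \<noteq> 0 \<or> A k i \<noteq> 0"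
    by blast
  thus ?thesis
  proof cases
    case 1 thus ?thesis using Y_weight[OF k_in] by (simp add: reflected_at_k)
  next
    case 2 thus ?thesis using X_weight[OF i] by (simp add: reflected_unlinked)
  next
    case 3 thus ?thesis
      using weight_vector_bracket[OF X_weight[OF i] X_par_i[OF i] X_weight[OF k_in]]
      by (simp add: reflected_linked)
  qed
qed

lemma reflected_Y_weight:
  assumes i: "i \<in> I" shows "weight_vector (\<lambda>h. - r i h) (Y' i)"
proof -
  consider "i = k" | "i \<noteq> k" "A i k = 0" "A k i = 0" | "i \<noteq> k" "A i k \<noteq> 0 \<or> A k i \<noteq> 0"
    by blast
  thus ?thesis
  proof cases
    case 1 thus ?thesis using X_weight[OF k_in] by (simp add: reflected_at_k)
  next
    case 2 thus ?thesis using Y_weight[OF i] by (simp add: reflected_unlinked)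
  next
    case 3 thus ?thesis
      using weight_vector_bracket[OF Y_weight[OF i] Y_par_i[OF i] Y_weight[OF k_in]]
      by (simp add: reflected_linked algebra_simps)
  qed
qed

text \<open>\<open>[X'\<^sub>k,Y'\<^sub>j] = [Y\<^sub>k,Y'\<^sub>j] = 0\<close> for \<open>j \<noteq> k\<close>: either \<open>[Y\<^sub>k,Y\<^sub>j] = 0\<close>, or
  \<open>[Y\<^sub>k,[Y\<^sub>j,Y\<^sub>k]] = \<plusminus>[Y\<^sub>k,[Y\<^sub>k,Y\<^sub>j]] = 0\<close> by nilpotency of \<open>ad Y\<^sub>k\<close>.\<close>
lemma reflected_bracket_k_left:
  assumes j: "j \<in> I" "j \<noteq> k" shows "br (X' k) (Y' j) = 0"
proof -
  consider "A j k = 0" "A k j = 0" | "A j k \<noteq> 0 \<or> A k j \<noteq> 0" by blast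
  thus ?thesis
  proof cases
    case 1
    have "br (Y j) (Y k) = 0" using Y_bracket_vanishes[OF j(1) k_in] 1 by blast
    hence "br (Y k) (Y j) = 0" using super_antisym[OF Yk_odd Y_par_i[OF j(1)]] by simp
    thus ?thesis using 1 j by (simp add: reflected_at_k reflected_unlinked)
  next
    case 2
    have "br (Y k) (br (Y j) (Y k)) = 0"
      unfolding super_antisym[OF Y_par_i[OF j(1)] Yk_odd] by (simp add: br_negR br_scaleR Yk_nilpotent)
    thus ?thesis using 2 j by (simp add: reflected_at_k reflected_linked)
  qed
qed

lemma reflected_bracket_k_right:
  assumes i: "i \<in> I" "i \<noteq> k" shows "br (X' i) (Y' k) = 0"
proof -
  consider "A i k = 0" "A k i = 0" | "A i k \<noteq> 0 \<or> A k i \<noteq> 0" by blast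
  thus ?thesis
  proof cases
    case 1 thus ?thesis
      using X_bracket_vanishes[OF i(1) k_in] i by (simp add: reflected_at_k reflected_unlinked)
  next
    case 2
    have "br (br (X i) (X k)) (X k) = 0"
      unfolding super_antisym[OF br_par[OF X_par_i[OF i(1)] Xk_odd] Xk_odd]
      unfolding super_antisym[OF X_par_i[OF i(1)] Xk_odd] by (simp add: br_negR br_scaleR Xk_nilpotent)
    thus ?thesis using 2 i by (simp add: reflected_at_k reflected_linked)
  qed
qed

text \<open>For distinct \<open>i, j \<noteq> k\<close> all candidate brackets \<open>[X'\<^sub>i,Y'\<^sub>j]\<close> vanish, by the
  Jacobi identity and \<open>[X\<^sub>i,Y\<^sub>j] = [X\<^sub>i,Y\<^sub>k] = [X\<^sub>k,Y\<^sub>j] = 0\<close>.\<close>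
lemma brackets_off_k:
  assumes i: "i \<in> I" "i \<noteq> k" and j: "j \<in> I" "j \<noteq> k" and ij: "i \<noteq> j"
  shows "br (X i) (Y j) = 0" and "br (br (X i) (X k)) (Y j) = 0"
    and "br (X i) (br (Y j) (Y k)) = 0" and "br (br (X i) (X k)) (br (Y j) (Y k)) = 0"
proof -
  have XY0: "br (X i) (Y j) = 0" "br (X i) (Y k) = 0" "br (X k) (Y j) = 0"
    using XY[OF i(1) j(1)] XY[OF i(1) k_in] XY[OF k_in j(1)] ij i j by auto
  have YX0: "br (Y j) (X i) = 0" "br (Y j) (X k) = 0"
    using YX[OF i(1) j(1)] YX[OF k_in j(1)] ij j by auto
  show "br (X i) (Y j) = 0" by (fact XY0(1))
  have "br (Y j) (br (X i) (X k)) = 0"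
    unfolding super_jacobi[OF Y_par_i[OF j(1)] X_par_i[OF i(1)]] using YX0 by (simp add: br_scaleR)
  thus "br (br (X i) (X k)) (Y j) = 0"
    unfolding super_antisym[OF br_par[OF X_par_i[OF i(1)] Xk_odd] Y_par_i[OF j(1)]] by simp
  show XYY: "br (X i) (br (Y j) (Y k)) = 0"
    unfolding super_jacobi[OF X_par_i[OF i(1)] Y_par_i[OF j(1)]] using XY0 by (simp add: br_scaleR)
  have "br (X k) (br (Y j) (Y k)) = scale (psign True (p j)) (scale (A k j) (Y j))"
    unfolding super_jacobi[OF Xk_odd Y_par_i[OF j(1)]] using XY0 XY[OF k_in k_in] Yh[OF j(1) k_in] by simp
  hence "br (X i) (br (X k) (br (Y j) (Y k))) = 0" using XY0 by (simp add: br_scaleR)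
  thus "br (br (X i) (X k)) (br (Y j) (Y k)) = 0"
    using super_jacobi[OF X_par_i[OF i(1)] Xk_odd, of "br (Y j) (Y k)"] XYY by (simp add: algebra_simps)
qed

lemma reflected_bracket_off_k:
  assumes i: "i \<in> I" "i \<noteq> k" and j: "j \<in> I" "j \<noteq> k" and ij: "i \<noteq> j"
  shows "br (X' i) (Y' j) = 0"
proof -
  have "X' i = X i \<or> X' i = br (X i) (X k)" "Y' j = Y j \<or> Y' j = br (Y j) (Y k)"
    using i(2) j(2) by (simp_all add: odd_refl_X_def odd_refl_Y_def)
  thus ?thesis using brackets_off_k[OF i j ij] by auto
qed

lemma reflected_brackets:
  assumes i: "i \<in> I" and j: "j \<in> I"
  shows "br (X' i) (Y' j) = (if i = j then odd_refl_h br A X Y k i else 0)"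
proof (cases "i = j")
  case True thus ?thesis by (simp add: odd_refl_h_def)
next
  case False
  consider "i = k" | "j = k" | "i \<noteq> k" "j \<noteq> k" by blast
  thus ?thesis
    using False i j reflected_bracket_k_left reflected_bracket_k_right reflected_bracket_off_k
    by cases auto
qed

lemma X_from_reflected:
  assumes i: "i \<in> I" "i \<noteq> k" and Aki: "A k i \<noteq> 0"
  shows "X i = scale (- inverse (A k i)) (br (br (X i) (X k)) (Y k))"
proof -
  have "br (X i) (br (X k) (Y k))
      = br (br (X i) (X k)) (Y k) + scale (psign (p i) True) (br (X k) (br (X i) (Y k)))"
    by (rule super_jacobi[OF X_par_i[OF i(1)] Xk_odd])
  hence "br (br (X i) (X k)) (Y k) = - scale (A k i) (X i)"
    using XY[OF k_in k_in] XY[OF i(1) k_in] i(2) Xh[OF i(1) k_in] by simp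
  thus ?thesis using Aki by simp
qed

lemma Y_from_reflected:
  assumes i: "i \<in> I" "i \<noteq> k" and Aki: "A k i \<noteq> 0"
  shows "Y i = scale (inverse (A k i)) (br (br (Y i) (Y k)) (X k))"
proof -
  have "br (Y i) (br (Y k) (X k))
      = br (br (Y i) (Y k)) (X k) + scale (psign (p i) True) (br (Y k) (br (Y i) (X k)))"
    by (rule super_jacobi[OF Y_par_i[OF i(1)] Yk_odd])
  hence "br (br (Y i) (Y k)) (X k) = scale (A k i) (Y i)"
    using YX[OF k_in k_in] YX[OF k_in i(1)] i(2) Yh[OF i(1) k_in] pk by simp
  thus ?thesis using Aki by simp
qed

text \<open>If \<open>\<alpha>\<^sub>k\<close> is regular, every \<open>i\<close> linked to \<open>k\<close> has \<open>a\<^sub>k\<^sub>i \<noteq> 0\<close>, so all old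
  generators lie in the subalgebra generated by the new ones.\<close>
lemma reflected_generate:
  assumes reg: "regular_root n A k"
  shows "lie_generated scale br (H \<union> X' ` I \<union> Y' ` I) = UNIV"
proof -
  let ?G = "lie_generated scale br (H \<union> X' ` I \<union> Y' ` I)"
  have G: "subalgebra ?G" by (rule lie_generated_subalgebra)
  hence G_sub: "subspace ?G" and G_br: "\<And>x y. x \<in> ?G \<Longrightarrow> y \<in> ?G \<Longrightarrow> br x y \<in> ?G"
    unfolding subalgebra_def by blast+
  have new_in: "H \<union> X' ` I \<union> Y' ` I \<subseteq> ?G" by (rule lie_generated_superset)
  have "Y' k \<in> ?G" "X' k \<in> ?G" using new_in k_in by blast+
  hence Xk: "X k \<in> ?G" and Yk: "Y k \<in> ?G" by (simp_all add: reflected_at_k)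
  have "X i \<in> ?G \<and> Y i \<in> ?G" if i: "i \<in> I" for i
  proof -
    have new_i: "X' i \<in> ?G" "Y' i \<in> ?G" using new_in i by blast+
    consider "i = k" | "i \<noteq> k" "A i k = 0" "A k i = 0" | "i \<noteq> k" "A i k \<noteq> 0 \<or> A k i \<noteq> 0"
      by blast
    thus ?thesis
    proof cases
      case 1 thus ?thesis using Xk Yk by simp
    next
      case 2 thus ?thesis using new_i by (simp add: reflected_unlinked)
    next
      case 3
      hence Aki: "A k i \<noteq> 0" using reg i unfolding regular_root_def by blast
      have "br (X i) (X k) \<in> ?G" "br (Y i) (Y k) \<in> ?G"
        using new_i 3 by (simp_all add: reflected_linked)
      thus ?thesis
        using X_from_reflected[OF i 3(1) Aki] Y_from_reflected[OF i 3(1) Aki] Xk Yk G_br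
          subspace_scale[OF G_sub] by metis
    qed
  qed
  hence "H \<union> X ` I \<union> Y ` I \<subseteq> ?G" using new_in by blast
  hence "lie_generated scale br (H \<union> X ` I \<union> Y ` I) \<subseteq> ?G" using G by (rule lie_generated_least)
  thus ?thesis using gen by blast
qed

end

theorem lemma4p1:
  fixes scale :: "complex \<Rightarrow> 'g::ab_group_add \<Rightarrow> 'g"
    and br :: "'g \<Rightarrow> 'g \<Rightarrow> 'g"
    and G0 G1 H :: "'g set"
    and n k :: nat
    and A :: "nat \<Rightarrow> nat \<Rightarrow> complex"
    and p :: "nat \<Rightarrow> bool"
    and \<alpha> :: "nat \<Rightarrow> 'g \<Rightarrow> complex"
    and hh X Y :: "nat \<Rightarrow> 'g"
  assumes lsa: "lie_superalgebra scale br G0 G1"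
    and H_sub: "module.subspace scale H"
    and H_even: "H \<subseteq> G0"
    and H_abel: "\<forall>x\<in>H. \<forall>y\<in>H. br x y = 0"
    and H_dim: "vector_space.dim scale H = n + corank n A"
    and \<alpha>_lin: "\<forall>i\<in>{1..n}. linear_on scale H (\<alpha> i)"
    and \<alpha>_indep: "lin_indep_on H n \<alpha>"
    and hh_in: "\<forall>i\<in>{1..n}. hh i \<in> H"
    and hh_val: "\<forall>i\<in>{1..n}. \<forall>j\<in>{1..n}. \<alpha> j (hh i) = A i j"
    and X_par: "\<forall>i\<in>{1..n}. X i \<in> par_part G0 G1 (p i)"
    and Y_par: "\<forall>i\<in>{1..n}. Y i \<in> par_part G0 G1 (p i)"
    and rel_X: "\<forall>h\<in>H. \<forall>i\<in>{1..n}. br h (X i) = scale (\<alpha> i h) (X i)"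
    and rel_Y: "\<forall>h\<in>H. \<forall>i\<in>{1..n}. br h (Y i) = scale (- \<alpha> i h) (Y i)"
    and rel_XY: "\<forall>i\<in>{1..n}. \<forall>j\<in>{1..n}. br (X i) (Y j) = (if i = j then hh i else 0)"
    and gen: "lie_generated scale br (H \<union> X ` {1..n} \<union> Y ` {1..n}) = UNIV"
    and maximal: "\<forall>J. lie_ideal scale br J \<and> J \<inter> H = {0} \<longrightarrow> J = {0}"
    and k_in: "k \<in> {1..n}"
    and akk: "A k k = 0"
    and pk: "p k"
  shows "lin_indep_on H n (odd_refl_root A \<alpha> k)
    \<and> (\<forall>h\<in>H. \<forall>i\<in>{1..n}.
          br h (odd_refl_X br A X Y k i) = scale (odd_refl_root A \<alpha> k i h) (odd_refl_X br A X Y k i))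
    \<and> (\<forall>h\<in>H. \<forall>i\<in>{1..n}.
          br h (odd_refl_Y br A X Y k i) = scale (- odd_refl_root A \<alpha> k i h) (odd_refl_Y br A X Y k i))
    \<and> (\<forall>i\<in>{1..n}. \<forall>j\<in>{1..n}.
          br (odd_refl_X br A X Y k i) (odd_refl_Y br A X Y k j)
            = (if i = j then odd_refl_h br A X Y k i else 0))
    \<and> (regular_root n A k \<longrightarrow>
          lie_generated scale br
            (H \<union> odd_refl_X br A X Y k ` {1..n} \<union> odd_refl_Y br A X Y k ` {1..n}) = UNIV)"
proof -
  interpret odd_reflection scale br G0 G1 H n A p \<alpha> hh X Y k
    by unfold_locales (rule assms)+
  show ?thesis
    using odd_refl_root_indep[OF \<alpha>_indep k_in] reflected_X_weight reflected_Y_weight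
      reflected_brackets reflected_generate
    by (simp add: weight_vector_def)
qed

end
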